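(* Let $\psi\in\Psi$ satisfy $\lim_{t\to\infty}\frac{\psi(t\psi(t))}{\psi(t)}=1$. Let $x\in M_\psi$ and $c>\|x\|_{M_\psi}$. Then $n_x(1/t)\le ct\psi(t)$ for all sufficiently large $t$.
   Context: $\Psi$ is the class of concave increasing functions $\psi$ on $[0,\infty)$ with $\psi(\infty)=\infty$, $\psi(t)=O(t)$ as $t\to0$, $\psi(t)=o(t)$ as $t\to\infty$. For bounded measurable $x$ on $(0,\infty)$, $n_x(\lambda)=m(\{s:|x(s)|>\lambda\})$ and $x^*$ is the nonincreasing right-continuous rearrangement of $|x|$. $M_\psi$ is the space of bounded measurable $x$ with $\|x\|_{M_\psi}=\sup_{t>0}\frac1{\psi(t)}\int_0^tx^*(s)ds<\infty$. *)

theory Defs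
  imports "HOL-Analysis.Analysis" "HOL-Library.Landau_Symbols"
begin

definition Psi_class :: "(real \<Rightarrow> real) set" where
  "Psi_class = {\<psi>. concave_on {0..} \<psi> \<and> mono_on {0..} \<psi>
      \<and> filterlim \<psi> at_top at_top
      \<and> \<psi> \<in> O[at_right 0](\<lambda>t. t)
      \<and> \<psi> \<in> o[at_top](\<lambda>t. t)}"

text \<open>Functions on (0,inf) are modelled as real functions; only values on (0,inf) matter.\<close>
definition bdd_meas :: "(real \<Rightarrow> real) \<Rightarrow> bool" where
  "bdd_meas x \<longleftrightarrow> set_borel_measurable lborel {0<..} x \<and> bounded (x ` {0<..})"

definition distr_fun :: "(real \<Rightarrow> real) \<Rightarrow> real \<Rightarrow> ennreal" where
  "distr_fun x l = emeasure lborel {s \<in> {0<..}. \<bar>x s\<bar> > l}"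

definition rearr :: "(real \<Rightarrow> real) \<Rightarrow> real \<Rightarrow> real" where
  "rearr x t = Inf {l. l \<ge> 0 \<and> distr_fun x l \<le> ennreal t}"

definition Mpsi_quot :: "(real \<Rightarrow> real) \<Rightarrow> (real \<Rightarrow> real) \<Rightarrow> real \<Rightarrow> real" where
  "Mpsi_quot \<psi> x t = (LINT s:{0..t}|lborel. rearr x s) / \<psi> t"

definition in_Mpsi :: "(real \<Rightarrow> real) \<Rightarrow> (real \<Rightarrow> real) \<Rightarrow> bool" where
  "in_Mpsi \<psi> x \<longleftrightarrow> bdd_meas x \<and> bdd_above (Mpsi_quot \<psi> x ` {0<..})"

definition Mpsi_norm :: "(real \<Rightarrow> real) \<Rightarrow> (real \<Rightarrow> real) \<Rightarrow> real" where
  "Mpsi_norm \<psi> x = (SUP t\<in>{0<..}. Mpsi_quot \<psi> x t)"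

end

theory Submission imports Defs begin

text \<open>If \<open>n\<^sub>x(l) > s\<close>, then \<open>x\<^sup>* \<ge> l\<close> on \<open>[0,s]\<close>, so \<open>s l \<le> \<integral>\<^sub>0\<^sup>s x\<^sup>* \<le> \<parallel>x\<parallel> \<psi>(s)\<close>.
  Taking \<open>l = 1/t\<close> and \<open>s = c t \<psi>(t)\<close> gives \<open>c \<psi>(t) \<le> \<parallel>x\<parallel> \<psi>(c t \<psi>(t))\<close>. Two applications
  of \<open>\<psi>(t \<psi>(t)) / \<psi>(t) \<rightarrow> 1\<close> (at \<open>t\<close> and at \<open>max c 1 \<cdot> t\<close>) together with monotonicity
  show that \<open>\<psi>(c t \<psi>(t)) / \<psi>(t)\<close> is eventually below any \<open>K > 1\<close>, in particular below
  some \<open>K\<close> with \<open>\<parallel>x\<parallel> K < c\<close>, a contradiction.\<close>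

lemma bdd_meas_level_set_sets:
  assumes "bdd_meas x"
  shows "{s \<in> {0<..}. \<bar>x s\<bar> > l} \<in> sets lborel"
proof -
  have "(\<lambda>s. indicator {0<..} s *\<^sub>R x s) \<in> borel_measurable lborel"
    using assms unfolding bdd_meas_def set_borel_measurable_def by auto
  moreover have "{s \<in> {0<..}. \<bar>x s\<bar> > l} = {s. 0 < s \<and> \<bar>indicator {0<..} s *\<^sub>R x s\<bar> > l}"
    by (auto simp: indicator_def)
  ultimately show ?thesis by simp
qed

lemma distr_fun_antimono:
  assumes "bdd_meas x" "l \<le> l'"
  shows "distr_fun x l' \<le> distr_fun x l"
  unfolding distr_fun_def using assms
  by (intro emeasure_mono bdd_meas_level_set_sets) auto

lemma bdd_meas_distr_fun_vanishes:
  assumes "bdd_meas x"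
  obtains B where "B \<ge> 0" "distr_fun x B = 0"
proof -
  obtain B where "\<forall>y\<in>x ` {0<..}. norm y \<le> B"
    using assms unfolding bdd_meas_def bounded_iff by auto
  then have "{s \<in> {0<..}. \<bar>x s\<bar> > max B 0} = {}"
    by (auto simp: not_less intro: order_trans[of _ B])
  then have "distr_fun x (max B 0) = 0"
    unfolding distr_fun_def by (metis emeasure_empty)
  then show ?thesis by (intro that[of "max B 0"]) auto
qed

lemma rearr_bounded:
  assumes "bdd_meas x"
  obtains B where "\<And>u. 0 \<le> rearr x u" "\<And>u. rearr x u \<le> B"
proof -
  obtain B where "B \<ge> 0" "distr_fun x B = 0"
    using bdd_meas_distr_fun_vanishes assms by blast
  then have B_mem: "B \<in> {l. l \<ge> 0 \<and> distr_fun x l \<le> ennreal u}" for u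
    by auto
  show ?thesis
  proof
    show "0 \<le> rearr x u" for u
      unfolding rearr_def using B_mem by (intro cInf_greatest) auto
    show "rearr x u \<le> B" for u
      unfolding rearr_def using B_mem by (intro cInf_lower bdd_belowI[of _ 0]) auto
  qed
qed

lemma rearr_antimono:
  assumes "bdd_meas x" "u \<le> v"
  shows "rearr x v \<le> rearr x u"
proof -
  obtain B where "B \<ge> 0" "distr_fun x B = 0"
    using bdd_meas_distr_fun_vanishes assms by blast
  then have "B \<in> {l. l \<ge> 0 \<and> distr_fun x l \<le> ennreal u}"
    by auto
  then show ?thesis
    unfolding rearr_def using assms(2)
    by (intro cInf_superset_mono bdd_belowI[of _ 0]) (auto intro: order_trans ennreal_leI)
qed

lemma rearr_set_integrable:
  assumes "bdd_meas x"
  shows "set_integrable lborel {0..s} (rearr x)"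
proof -
  obtain B where B: "\<And>u. 0 \<le> rearr x u" "\<And>u. rearr x u \<le> B"
    using rearr_bounded assms by blast
  have "mono (\<lambda>u. - rearr x u)"
    using rearr_antimono[OF assms] by (auto simp: mono_def)
  then have "(\<lambda>u. - (- rearr x u)) \<in> borel_measurable borel"
    using borel_measurable_mono borel_measurable_uminus by blast
  then have "rearr x \<in> borel_measurable lborel" by simp
  then show ?thesis
    unfolding set_integrable_def
    by (intro integrableI_bounded_set_indicator[where B=B])
      (use B in \<open>auto simp: emeasure_lborel_Icc_eq\<close>)
qed

lemma le_rearr_if_distr_fun_greater:
  assumes "bdd_meas x" "ennreal u < distr_fun x l"
  shows "l \<le> rearr x u"
  unfolding rearr_def
proof (rule cInf_greatest)
  obtain B where "B \<ge> 0" "distr_fun x B = 0"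
    using bdd_meas_distr_fun_vanishes assms(1) by blast
  then show "{l. l \<ge> 0 \<and> distr_fun x l \<le> ennreal u} \<noteq> {}"
    by auto
next
  fix l' assume "l' \<in> {l. l \<ge> 0 \<and> distr_fun x l \<le> ennreal u}"
  then show "l \<le> l'"
    using distr_fun_antimono[OF assms(1), of l' l] assms(2) by (force simp: not_le)
qed

lemma distr_fun_greater_imp_le_integral_rearr:
  assumes "bdd_meas x" "s \<ge> 0" "ennreal s < distr_fun x l"
  shows "s * l \<le> (LINT u:{0..s}|lborel. rearr x u)"
proof -
  have "l \<le> rearr x u" if "u \<in> {0..s}" for u
  proof (rule le_rearr_if_distr_fun_greater[OF assms(1)])
    have "ennreal u \<le> ennreal s" using that by (auto intro: ennreal_leI)
    then show "ennreal u < distr_fun x l" using assms(3) by (rule le_less_trans)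
  qed
  then have "(LINT u:{0..s}|lborel. l) \<le> (LINT u:{0..s}|lborel. rearr x u)"
    by (intro set_integral_mono rearr_set_integrable assms(1))
      (simp_all add: set_integrable_def emeasure_lborel_Icc_eq)
  then show ?thesis
    using assms(2) by (simp add: set_integral_const mult.commute)
qed

lemma Mpsi_quot_le_Mpsi_norm:
  assumes "in_Mpsi \<psi> x" "s > 0"
  shows "Mpsi_quot \<psi> x s \<le> Mpsi_norm \<psi> x"
  unfolding Mpsi_norm_def using assms unfolding in_Mpsi_def by (intro cSUP_upper) auto

lemma Mpsi_norm_nonneg:
  assumes "in_Mpsi \<psi> x" "t > 0" "\<psi> t > 0"
  shows "0 \<le> Mpsi_norm \<psi> x"
proof -
  obtain B where "\<And>u. 0 \<le> rearr x u" "\<And>u. rearr x u \<le> B"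
    using rearr_bounded assms(1) unfolding in_Mpsi_def by blast
  then have "0 \<le> (LINT u:{0..t}|lborel. rearr x u)"
    unfolding set_lebesgue_integral_def by (intro integral_nonneg_AE) (auto simp: indicator_def)
  then have "0 \<le> Mpsi_quot \<psi> x t"
    unfolding Mpsi_quot_def using assms(3) by simp
  then show ?thesis
    using Mpsi_quot_le_Mpsi_norm[OF assms(1,2)] by linarith
qed

lemma distr_fun_greater_imp_le_Mpsi_norm:
  assumes "in_Mpsi \<psi> x" "s > 0" "\<psi> s > 0" "ennreal s < distr_fun x l"
  shows "s * l \<le> Mpsi_norm \<psi> x * \<psi> s"
proof -
  have "s * l \<le> (LINT u:{0..s}|lborel. rearr x u)"
    using assms unfolding in_Mpsi_def
    by (intro distr_fun_greater_imp_le_integral_rearr) auto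
  also have "\<dots> = Mpsi_quot \<psi> x s * \<psi> s"
    unfolding Mpsi_quot_def using assms(3) by simp
  also have "\<dots> \<le> Mpsi_norm \<psi> x * \<psi> s"
    using Mpsi_quot_le_Mpsi_norm[OF assms(1,2)] assms(3) by (simp add: mult_right_mono)
  finally show ?thesis .
qed

lemma eventually_comp_scaled_mult_self_less:
  fixes \<psi> :: "real \<Rightarrow> real"
  assumes mono: "mono_on {0..} \<psi>" and lim: "filterlim \<psi> at_top at_top"
    and ratio: "((\<lambda>t. \<psi> (t * \<psi> t) / \<psi> t) \<longlongrightarrow> 1) at_top"
    and "c > 0" "K > 1"
  shows "\<forall>\<^sub>F t in at_top. \<psi> (c * t * \<psi> t) < K * \<psi> t"
proof -
  define a where "a = sqrt K"
  define c' where "c' = max c 1"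
  have "a > 1" "a * a = K" "c' \<ge> 1" "c \<le> c'"
    using \<open>K > 1\<close> unfolding a_def c'_def by auto
  have ratio_less: "\<forall>\<^sub>F t in at_top. \<psi> (t * \<psi> t) / \<psi> t < a"
    using order_tendstoD(2)[OF ratio \<open>a > 1\<close>] .
  have "filterlim (\<lambda>t. c' * t) at_top at_top"
    using \<open>c' \<ge> 1\<close> by (intro filterlim_tendsto_pos_mult_at_top[OF tendsto_const])
      (auto simp: filterlim_ident)
  then have "\<forall>\<^sub>F t in at_top. \<psi> (c' * t * \<psi> (c' * t)) / \<psi> (c' * t) < a"
    by (rule eventually_compose_filterlim[OF ratio_less])
  moreover have "\<forall>\<^sub>F t in at_top. \<psi> t \<ge> c'"
    using lim by (simp add: filterlim_at_top)
  ultimately show ?thesis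
    using ratio_less eventually_ge_at_top[of 1]
  proof eventually_elim
    case (elim t)
    then have "t \<ge> 1" "\<psi> t \<ge> c'" by auto
    have \<psi>_mono: "\<psi> u \<le> \<psi> v" if "0 \<le> u" "u \<le> v" for u v
      using that by (intro mono_onD[OF mono]) auto
    have "\<psi> t > 0" "\<psi> t \<le> \<psi> (c' * t)"
      using \<open>\<psi> t \<ge> c'\<close> \<open>c' \<ge> 1\<close> \<open>t \<ge> 1\<close> by (auto intro: \<psi>_mono)
    have "c * t * \<psi> t \<le> c' * t * \<psi> (c' * t)"
      using \<open>c \<le> c'\<close> \<open>c > 0\<close> \<open>t \<ge> 1\<close> \<open>\<psi> t > 0\<close> \<open>\<psi> t \<le> \<psi> (c' * t)\<close>
      by (intro mult_mono) auto
    then have "\<psi> (c * t * \<psi> t) \<le> \<psi> (c' * t * \<psi> (c' * t))"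
      using \<open>c > 0\<close> \<open>t \<ge> 1\<close> \<open>\<psi> t > 0\<close> by (intro \<psi>_mono) auto
    also have "\<dots> < a * \<psi> (c' * t)"
      using elim \<open>\<psi> t > 0\<close> \<open>\<psi> t \<le> \<psi> (c' * t)\<close> by (simp add: divide_less_eq)
    also have "\<dots> \<le> a * \<psi> (t * \<psi> t)"
      using \<open>\<psi> t \<ge> c'\<close> \<open>c' \<ge> 1\<close> \<open>t \<ge> 1\<close> \<open>a > 1\<close>
      by (intro mult_left_mono \<psi>_mono) (auto simp: mult.commute)
    also have "\<dots> < a * (a * \<psi> t)"
      using elim \<open>\<psi> t > 0\<close> \<open>a > 1\<close> by (simp add: divide_less_eq)
    finally show ?case
      using \<open>a * a = K\<close> by (simp add: mult.assoc[symmetric])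
  qed
qed

theorem lemma2p2:
  fixes \<psi> x :: "real \<Rightarrow> real" and c :: real
  assumes "\<psi> \<in> Psi_class"
    and "((\<lambda>t. \<psi> (t * \<psi> t) / \<psi> t) \<longlongrightarrow> 1) at_top"
    and "in_Mpsi \<psi> x"
    and "c > Mpsi_norm \<psi> x"
  shows "\<forall>\<^sub>F t in at_top. distr_fun x (1 / t) \<le> ennreal (c * t * \<psi> t)"
proof -
  define N where "N = Mpsi_norm \<psi> x"
  define K where "K = 2 * c / (c + N)"
  have mono: "mono_on {0..} \<psi>" and lim: "filterlim \<psi> at_top at_top"
    using assms(1) unfolding Psi_class_def by auto
  have "\<forall>\<^sub>F t in at_top. t > 0 \<and> \<psi> t > 0"
    using eventually_gt_at_top lim[unfolded filterlim_at_top_dense, rule_format]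
    by (rule eventually_conj)
  then obtain t0 where "t0 > 0" "\<psi> t0 > 0"
    using eventually_happens'[OF trivial_limit_at_top_linorder] by blast
  then have "0 \<le> N"
    unfolding N_def by (rule Mpsi_norm_nonneg[OF assms(3)])
  moreover have "N < c"
    using assms(4) unfolding N_def .
  ultimately have "c > 0" "K > 1" "N * K < c"
    unfolding K_def by (simp_all add: field_simps)
  have "\<forall>\<^sub>F t in at_top. \<psi> (c * t * \<psi> t) < K * \<psi> t"
    by (rule eventually_comp_scaled_mult_self_less[OF mono lim assms(2) \<open>c > 0\<close> \<open>K > 1\<close>])
  moreover have "\<forall>\<^sub>F t in at_top. \<psi> t \<ge> 1 / c"
    using lim by (simp add: filterlim_at_top)
  ultimately show ?thesis
    using eventually_ge_at_top[of 1]
  proof eventually_elim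
    case (elim t)
    define s where "s = c * t * \<psi> t"
    have "\<psi> t > 0"
      using elim \<open>c > 0\<close> by (auto intro: less_le_trans[of 0 "1/c"])
    have "t \<le> s"
      using elim \<open>c > 0\<close> unfolding s_def by (simp add: field_simps mult_left_mono)
    then have "\<psi> t \<le> \<psi> s"
      using elim by (intro mono_onD[OF mono]) auto
    show ?case
    proof (rule ccontr)
      assume "\<not> ?case"
      then have "ennreal s < distr_fun x (1 / t)"
        unfolding s_def by simp
      then have "s * (1 / t) \<le> N * \<psi> s"
        unfolding N_def using \<open>t \<le> s\<close> \<open>\<psi> t \<le> \<psi> s\<close> \<open>\<psi> t > 0\<close> elim
        by (intro distr_fun_greater_imp_le_Mpsi_norm[OF assms(3)]) auto
      also have "\<dots> \<le> N * (K * \<psi> t)"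
        using elim \<open>0 \<le> N\<close> unfolding s_def by (intro mult_left_mono) auto
      also have "\<dots> < c * \<psi> t"
        using \<open>N * K < c\<close> \<open>\<psi> t > 0\<close> by (simp add: mult.assoc[symmetric])
      finally show False
        using elim unfolding s_def by simp
    qed
  qed
qed

end
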